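(* Let $X$ be a subshift with language $\mathcal L$, let $K$ be a positive integer (used in the density $\mathcal D$), let $w\in\mathcal L_n$, and let $\mathcal B=\{z^{(1)},\dots,z^{(p)}\}\subseteq\mathcal L_m$ satisfy: for every $y\in\mathcal L$ with $|y|>\max\{n,m\}$ and all $1\le j<j'\le|y|-\max\{m,n\}$ with $y_{[j,j+n-1]}=y_{[j',j'+n-1]}=w$, there exist $1\le i\le p$ and $j\le k<j'$ with $y_{[k,k+m-1]}=z^{(i)}$. Then for every $x\in X$ there exists $1\le j\le p$ with $$\mathcal D(z^{(j)},x)\ge\frac{1}{p(1+3n/m)}\,\mathcal D(w,x).$$
   Context: A subshift is a nonempty closed $X\subseteq\mathcal A^{\mathbb N}$ ($\mathcal A$ finite) invariant under the left shift; its language $\mathcal L$ is the set of finite nonempty words occurring in its points; $\mathcal L_n$ those of length $n$. (In the paper $K$ is the eventual constant value of $|\mathcal L_{n+1}|-|\mathcal L_n|$.) Upper density: for $x\in X$, $w\in\mathcal L$ with $n=|w|$, let $r(w,x,j)=1$ if $x_{[k,k+n-1]}=w$ for some $k$ with $(j-1)(K+1)n<k\le j(K+1)n$ and $0$ otherwise, and $\mathcal D(w,x)=\limsup_{N\to\infty}\frac1N\sum_{j=1}^Nr(w,x,j)$. *)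

theory Defs
  imports "HOL-Analysis.Analysis"
begin

definition subshift :: "(nat \<Rightarrow> 'a::finite) set \<Rightarrow> bool" where
  "subshift X \<longleftrightarrow> X \<noteq> {}
     \<and> closedin (product_topology (\<lambda>_. discrete_topology (UNIV::'a set)) (UNIV::nat set)) X
     \<and> (\<forall>x\<in>X. (\<lambda>i. x (Suc i)) \<in> X)"

definition factor :: "(nat \<Rightarrow> 'a) \<Rightarrow> nat \<Rightarrow> nat \<Rightarrow> 'a list" where
  "factor x k n = map x [k..<k+n]"

definition language :: "(nat \<Rightarrow> 'a) set \<Rightarrow> 'a list set" where
  "language X = {w. w \<noteq> [] \<and> (\<exists>x\<in>X. \<exists>k. factor x k (length w) = w)}"

text \<open>Subword of a finite word, 1-based: y_[j, j+n-1].\<close>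
definition subword :: "'a list \<Rightarrow> nat \<Rightarrow> nat \<Rightarrow> 'a list" where
  "subword y j n = take n (drop (j - 1) y)"

definition occ_ind :: "nat \<Rightarrow> 'a list \<Rightarrow> (nat \<Rightarrow> 'a) \<Rightarrow> nat \<Rightarrow> real" where
  "occ_ind K w x j = (let n = length w in
     if \<exists>k. (j - 1) * (K + 1) * n < k \<and> k \<le> j * (K + 1) * n \<and> factor x k n = w then 1 else 0)"

definition upper_density :: "nat \<Rightarrow> 'a list \<Rightarrow> (nat \<Rightarrow> 'a) \<Rightarrow> ereal" where
  "upper_density K w x =
     limsup (\<lambda>N. ereal ((1 / real N) * (\<Sum>j=1..N. occ_ind K w x j)))"

end

theory Submission
  imports Defs
begin

text \<open>Cut the positions of x into consecutive blocks of length (K+1)n. In every block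
  that contains an occurrence of w pick one occurrence; between the picked occurrences of two
  consecutive such blocks the hypothesis yields an occurrence of some z(i). Sending each
  w-block (except the last) to the block of length (K+1)m containing this z-occurrence, a
  fibre consists of w-blocks whose z-occurrences lie within distance (K+1)m of each other,
  and this forces the fibre to have fewer than m/n + 3 elements. Hence, up to one block,
  n times the number of w-blocks among the first N is at most m + 3n times the number of
  z-blocks among the first Nn/m + 1, summed over i; dividing by N and passing to the
  limsup, some z(i) must carry a 1/p share.\<close>

lemma length_factor [simp]: "length (factor x k l) = l"
  unfolding factor_def by simp

lemma take_drop_factor:
  assumes "b + a \<le> l"
  shows "take a (drop b (factor x k l)) = factor x (k + b) a"
  using assms unfolding factor_def by (simp add: take_map drop_map add.assoc)

lemma factor_in_language: "x \<in> X \<Longrightarrow> 0 < l \<Longrightarrow> factor x k l \<in> language X"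
  unfolding language_def by (auto simp: factor_def)

text \<open>For L = (K+1)|u| and P k meaning that u occurs at k, these are the j \<le> N with
  r(u,x,j) = 1.\<close>

definition block_hits :: "nat \<Rightarrow> (nat \<Rightarrow> bool) \<Rightarrow> nat \<Rightarrow> nat set" where
  "block_hits L P N = {j \<in> {1..N}. \<exists>k. (j - 1) * L < k \<and> k \<le> j * L \<and> P k}"

lemma finite_block_hits [simp]: "finite (block_hits L P N)"
  unfolding block_hits_def by simp

lemma block_hits_UN:
  "block_hits L (\<lambda>k. \<exists>i\<in>I. P i k) N = (\<Union>i\<in>I. block_hits L (P i) N)"
  unfolding block_hits_def by blast

lemma sum_occ_ind_eq_card_block_hits:
  "(\<Sum>j=1..N. occ_ind K u x j)
     = real (card (block_hits ((K + 1) * length u) (\<lambda>k. factor x k (length u) = u) N))"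
  unfolding occ_ind_def Let_def block_hits_def real_of_card mult.assoc
  by (rule sum.inter_filter[symmetric]) simp

lemma block_index_bounds:
  fixes q M :: nat
  assumes "0 < q" "0 < M"
  shows "((q - 1) div M) * M < q" and "q \<le> ((q - 1) div M + 1) * M"
proof -
  have "(q - 1) div M * M + (q - 1) mod M = q - 1" by (rule div_mult_mod_eq)
  moreover have "(q - 1) mod M < M" using assms(2) by simp
  ultimately show "((q - 1) div M) * M < q" and "q \<le> ((q - 1) div M + 1) * M"
    using assms(1) unfolding distrib_right by linarith+
qed

lemma card_mult_le_card_image_mult:
  assumes "finite D" and fiber: "\<And>v. v \<in> f ` D \<Longrightarrow> card {x \<in> D. f x = v} * a \<le> b"
  shows "card D * a \<le> card (f ` D) * b"
proof -
  have "card D = card (\<Union>v\<in>f ` D. {x \<in> D. f x = v})" by (rule arg_cong[of _ _ card]) blast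
  also have "\<dots> \<le> (\<Sum>v\<in>f ` D. card {x \<in> D. f x = v})"
    by (rule card_UN_le) (use assms(1) in simp)
  finally have "card D * a \<le> (\<Sum>v\<in>f ` D. card {x \<in> D. f x = v} * a)"
    by (metis mult_le_mono1 sum_distrib_right)
  also have "\<dots> \<le> (\<Sum>v\<in>f ` D. b)" using fiber by (rule sum_mono)
  finally show ?thesis by simp
qed

lemma card_window_bound:
  fixes F :: "nat set" and q s :: "nat \<Rightarrow> nat" and L M :: nat
  assumes "finite F" "0 < L"
    and lower: "\<And>j. j \<in> F \<Longrightarrow> (j - 1) * L < q j"
    and upper: "\<And>j. j \<in> F \<Longrightarrow> q j < s j * L"
    and successor: "\<And>j j'. j \<in> F \<Longrightarrow> j' \<in> F \<Longrightarrow> j < j' \<Longrightarrow> s j \<le> j'"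
    and window: "\<And>j j'. j \<in> F \<Longrightarrow> j' \<in> F \<Longrightarrow> q j' < q j + M"
  shows "card F * L < M + 3 * L"
proof (cases "card F \<le> 1")
  case True
  then have "card F * L \<le> L" using mult_le_mono1[of "card F" 1 L] by simp
  then show ?thesis using \<open>0 < L\<close> by linarith
next
  case False
  define a b where "a = Min F" and "b = Max F"
  have "F \<noteq> {}" using False by auto
  then have ab: "a \<in> F" "b \<in> F" and F_sub: "F \<subseteq> {a..b}"
    using \<open>finite F\<close> unfolding a_def b_def by auto
  have "a \<noteq> b"
  proof
    assume "a = b"
    then have "F \<subseteq> {a}" using F_sub by auto
    then show False using False card_mono[of "{a}" F] by simp
  qed
  then have "a < b" using F_sub ab by fastforce
  then have sa: "s a \<le> b" using successor ab by blast
  have "F \<subseteq> insert a {s a..b}" using F_sub successor[OF ab(1)] by fastforce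
  then have "card F \<le> card (insert a {s a..b})" by (rule card_mono[rotated]) simp
  also have "\<dots> \<le> b + 2 - s a" using sa by (simp add: card_insert_if) linarith
  finally have "card F \<le> b + 2 - s a" .
  then have "card F * L \<le> (b + 2 - s a) * L" by (rule mult_right_mono) simp
  moreover have "(b - 1) * L < s a * L + M"
    using lower[OF ab(2)] window[OF ab] upper[OF ab(1)] by linarith
  moreover have "(b + 2 - s a) * L + s a * L = (b - 1) * L + 3 * L"
  proof -
    have "b + 2 - s a + s a = b - 1 + 3" using sa \<open>a < b\<close> by linarith
    then show ?thesis by (metis add_mult_distrib)
  qed
  ultimately show ?thesis by linarith
qed

lemma card_mult_le_card_block_hits_mult:
  fixes q :: "nat \<Rightarrow> nat" and M Q :: nat
  assumes "finite D" "0 < M"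
    and q: "\<And>j. j \<in> D \<Longrightarrow> 0 < q j \<and> q j \<le> Q \<and> Pz (q j)"
    and window: "\<And>F. F \<subseteq> D \<Longrightarrow> (\<And>j j'. j \<in> F \<Longrightarrow> j' \<in> F \<Longrightarrow> q j' < q j + M)
                   \<Longrightarrow> card F * a \<le> b"
  shows "card D * a \<le> card (block_hits M Pz (Q div M + 1)) * b"
proof -
  define c where "c j = (q j - 1) div M + 1" for j
  have c_block: "(c j - 1) * M < q j \<and> q j \<le> c j * M" if "j \<in> D" for j
    using block_index_bounds[OF conjunct1[OF q[OF that]] \<open>0 < M\<close>] unfolding c_def by simp
  have "c j \<le> Q div M + 1" if "j \<in> D" for j
    using q[OF that] div_le_mono[of "q j - 1" Q M] unfolding c_def by fastforce
  then have "c ` D \<subseteq> block_hits M Pz (Q div M + 1)"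
    unfolding block_hits_def using c_block q by (fastforce simp: c_def)
  then have "card (c ` D) \<le> card (block_hits M Pz (Q div M + 1))" by (rule card_mono[rotated]) simp
  moreover have "card D * a \<le> card (c ` D) * b"
  proof (rule card_mult_le_card_image_mult[OF \<open>finite D\<close>])
    fix v
    have "q j' < q j + M" if "j \<in> D" "j' \<in> D" "c j = v" "c j' = v" for j j'
    proof -
      have "q j' \<le> c j * M" using c_block[OF that(2)] that(3,4) by simp
      moreover have "c j * M = (c j - 1) * M + M" by (simp add: c_def)
      ultimately show ?thesis using c_block[OF that(1)] by linarith
    qed
    then show "card {j \<in> D. c j = v} * a \<le> b" by (intro window) auto
  qed
  ultimately show ?thesis by (meson le_trans mult_le_mono1)
qed

lemma Min_greater_in:
  fixes J :: "'a::linorder set"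
  assumes "finite J" "j \<in> J" "j \<noteq> Max J"
  shows "Min {j' \<in> J. j < j'} \<in> J \<and> j < Min {j' \<in> J. j < j'}"
proof -
  have "Max J \<in> J" using assms(1,2) Max_in by blast
  moreover have "j < Max J" using assms by (simp add: le_neq_trans)
  ultimately have "Max J \<in> {j' \<in> J. j < j'}" by simp
  then have "Min {j' \<in> J. j < j'} \<in> {j' \<in> J. j < j'}" using \<open>finite J\<close> by (intro Min_in) auto
  then show ?thesis by simp
qed

lemma card_block_hits_le:
  fixes Pw Pz :: "nat \<Rightarrow> bool" and L M N :: nat
  assumes between: "\<And>k k'. k < k' \<Longrightarrow> Pw k \<Longrightarrow> Pw k' \<Longrightarrow> \<exists>q. k \<le> q \<and> q < k' \<and> Pz q"
    and "0 < L" "0 < M"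
  shows "(card (block_hits L Pw N) - 1) * L
           \<le> card (block_hits M Pz (N * L div M + 1)) * (M + 3 * L)"
proof -
  define J where "J = block_hits L Pw N"
  have "finite J" by (simp add: J_def)
  have "\<forall>j\<in>J. \<exists>k. (j - 1) * L < k \<and> k \<le> j * L \<and> Pw k" unfolding J_def block_hits_def by blast
  then obtain k where k: "\<And>j. j \<in> J \<Longrightarrow> (j - 1) * L < k j \<and> k j \<le> j * L \<and> Pw (k j)" by metis
  have J_le: "j \<le> N" if "j \<in> J" for j using that unfolding J_def block_hits_def by simp
  define D where "D = J - {Max J}"
  define s where "s j = Min {j' \<in> J. j < j'}" for j
  have s_least: "s j \<le> j'" if "j' \<in> J" "j < j'" for j j'
    unfolding s_def using that \<open>finite J\<close> by simp
  have s: "s j \<in> J \<and> j < s j" if "j \<in> D" for j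
    using Min_greater_in[OF \<open>finite J\<close>] that unfolding s_def D_def by blast
  have k_s: "k j < k (s j)" if "j \<in> D" for j
  proof -
    have "j \<in> J" "s j \<in> J" "j < s j" using s[OF that] that by (auto simp: D_def)
    then have "j * L \<le> (s j - 1) * L" by (intro mult_le_mono1) simp
    then have "k j \<le> (s j - 1) * L" using k[OF \<open>j \<in> J\<close>] by linarith
    then show ?thesis using k[OF \<open>s j \<in> J\<close>] by linarith
  qed
  have "\<exists>q. k j \<le> q \<and> q < k (s j) \<and> Pz q" if "j \<in> D" for j
    using between[OF k_s[OF that]] k s that by (auto simp: D_def)
  then obtain q where q: "\<And>j. j \<in> D \<Longrightarrow> k j \<le> q j \<and> q j < k (s j) \<and> Pz (q j)" by metis
  have q_lower: "(j - 1) * L < q j" and q_upper: "q j < s j * L" if "j \<in> D" for j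
    using k[of j] k[of "s j"] q[OF that] s[OF that] that by (auto simp: D_def)
  have "card D * L \<le> card (block_hits M Pz (N * L div M + 1)) * (M + 3 * L)"
  proof (rule card_mult_le_card_block_hits_mult[OF _ \<open>0 < M\<close>])
    show "finite D" using \<open>finite J\<close> by (simp add: D_def)
    show "0 < q j \<and> q j \<le> N * L \<and> Pz (q j)" if "j \<in> D" for j
    proof -
      have "s j * L \<le> N * L" using J_le s[OF that] mult_le_mono1 by blast
      then show ?thesis using q_lower[OF that] q_upper[OF that] q[OF that] by linarith
    qed
    show "card F * L \<le> M + 3 * L"
      if "F \<subseteq> D" and window: "\<And>j j'. j \<in> F \<Longrightarrow> j' \<in> F \<Longrightarrow> q j' < q j + M" for F
    proof (rule less_imp_le, rule card_window_bound[where q = q and s = s])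
      show "finite F" using \<open>F \<subseteq> D\<close> \<open>finite J\<close> finite_subset by (auto simp: D_def)
      show "s j \<le> j'" if "j \<in> F" "j' \<in> F" "j < j'" for j j'
        using s_least \<open>F \<subseteq> D\<close> that unfolding D_def by blast
    qed (use \<open>0 < L\<close> \<open>F \<subseteq> D\<close> q_lower q_upper window in auto)
  qed
  moreover have "card D = card J - 1"
    unfolding D_def using \<open>finite J\<close> by (cases "J = {}") (simp_all add: card_Diff_singleton)
  ultimately show ?thesis unfolding J_def by simp
qed

lemma limsup_average_le:
  fixes a :: "nat \<Rightarrow> real" and b :: "'i \<Rightarrow> nat \<Rightarrow> real" and n m :: nat and r :: real
  assumes "0 < n" "0 < m" "0 \<le> r"
    and bound: "\<And>N. (a N - 1) * n \<le> (real m + 3 * real n) * (\<Sum>i\<in>I. b i (N * n div m + 1))"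
    and small: "eventually (\<lambda>N. \<forall>i\<in>I. b i N \<le> r * N) sequentially"
  shows "limsup (\<lambda>N. ereal (1 / real N * a N)) \<le> ereal (card I * (1 + 3 * n / m) * r)"
proof -
  define C where "C = (m + 3 * n) / n * card I * r"
  define g where "g N = 1 / N + C * (n / m + 1 / N)" for N :: nat
  obtain N0 where N0: "\<And>N i. N0 \<le> N \<Longrightarrow> i \<in> I \<Longrightarrow> b i N \<le> r * N"
    using small unfolding eventually_sequentially by blast
  have "a N / N \<le> g N" if "N0 * m \<le> N" "0 < N" for N
  proof -
    define N' where "N' = N * n div m + 1"
    have "N \<le> N * n" using \<open>0 < n\<close> by simp
    then have "N0 * m \<le> N * n" using that(1) by linarith
    then have "N0 \<le> N'" unfolding N'_def using \<open>0 < m\<close> div_le_mono[of "N0 * m" "N * n" m] by simp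
    then have "(\<Sum>i\<in>I. b i N') \<le> (\<Sum>i\<in>I. r * N')" using N0 by (intro sum_mono) auto
    also have "\<dots> \<le> card I * (r * (N * n / m + 1))"
    proof -
      have "real N' \<le> N * n / m + 1"
        using of_nat_div_le_of_nat[of "N * n" m, where 'a = real] unfolding N'_def by simp
      then show ?thesis using \<open>0 \<le> r\<close> by (simp add: mult_left_mono)
    qed
    finally have "(m + 3 * n) / n * (\<Sum>i\<in>I. b i N') \<le> (m + 3 * n) / n * (card I * (r * (N * n / m + 1)))"
      by (rule mult_left_mono) simp
    then have "(m + 3 * n) / n * (\<Sum>i\<in>I. b i N') \<le> C * (N * n / m + 1)"
      unfolding C_def by (simp add: ac_simps)
    moreover have "a N - 1 \<le> (m + 3 * n) / n * (\<Sum>i\<in>I. b i N')"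
      using bound[of N] \<open>0 < n\<close> unfolding N'_def by (simp add: field_simps)
    ultimately have "a N / N \<le> (1 + C * (N * n / m + 1)) / N"
      using \<open>0 < N\<close> by (simp add: divide_right_mono)
    then show ?thesis using \<open>0 < N\<close> \<open>0 < m\<close> unfolding g_def by (simp add: field_simps)
  qed
  then have "eventually (\<lambda>N. ereal (1 / real N * a N) \<le> ereal (g N)) sequentially"
    unfolding eventually_sequentially by (intro exI[of _ "N0 * m + 1"]) auto
  then have "limsup (\<lambda>N. ereal (1 / real N * a N)) \<le> limsup (\<lambda>N. ereal (g N))"
    by (rule Limsup_mono)
  also have "\<dots> = ereal (C * (n / m))"
  proof (rule lim_imp_Limsup)
    have "g \<longlonglongrightarrow> 0 + C * (n / m + 0)" unfolding g_def by (intro tendsto_intros lim_1_over_n)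
    then show "(\<lambda>N. ereal (g N)) \<longlonglongrightarrow> ereal (C * (n / m))" by (simp add: tendsto_ereal)
  qed simp
  also have "C * (n / m) = card I * (1 + 3 * n / m) * r"
    unfolding C_def using \<open>0 < n\<close> \<open>0 < m\<close> by (simp add: field_simps)
  finally show ?thesis .
qed

lemma exists_limsup_average_ge:
  fixes a :: "nat \<Rightarrow> real" and b :: "'i \<Rightarrow> nat \<Rightarrow> real" and n m :: nat
  assumes "finite I" "I \<noteq> {}" "0 < n" "0 < m"
    and nonneg: "\<And>i N. i \<in> I \<Longrightarrow> 0 \<le> b i N"
    and bound: "\<And>N. (a N - 1) * n \<le> (real m + 3 * real n) * (\<Sum>i\<in>I. b i (N * n div m + 1))"
  shows "\<exists>i\<in>I. ereal (1 / (card I * (1 + 3 * n / m))) * limsup (\<lambda>N. ereal (1 / real N * a N))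
                \<le> limsup (\<lambda>N. ereal (1 / real N * b i N))"
proof (rule ccontr)
  define c where "c = 1 / (card I * (1 + 3 * n / m))"
  define A where "A = limsup (\<lambda>N. ereal (1 / real N * a N))"
  define B where "B i = limsup (\<lambda>N. ereal (1 / real N * b i N))" for i
  assume "\<not> ?thesis"
  then have "Max (B ` I) < ereal c * A"
    using \<open>finite I\<close> \<open>I \<noteq> {}\<close> by (auto simp: Max_less_iff not_le c_def A_def B_def)
  then obtain r where r: "Max (B ` I) < ereal r" "ereal r < ereal c * A" using ereal_dense2 by blast
  have "\<forall>i\<in>I. eventually (\<lambda>N. ereal (1 / real N * b i N) < ereal r) sequentially"
  proof
    fix i assume "i \<in> I"
    then have "B i < ereal r" using r(1) \<open>finite I\<close> \<open>I \<noteq> {}\<close> by (simp add: Max_less_iff)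
    then show "eventually (\<lambda>N. ereal (1 / real N * b i N) < ereal r) sequentially"
      unfolding B_def by (rule Limsup_lessD)
  qed
  then have "eventually (\<lambda>N. 0 < N \<and> (\<forall>i\<in>I. 1 / real N * b i N < r)) sequentially"
    using \<open>finite I\<close> eventually_gt_at_top[of 0] by (auto simp: eventually_ball_finite_distrib intro: eventually_conj)
  then obtain N0 where N0: "\<And>N. N0 \<le> N \<Longrightarrow> 0 < N \<and> (\<forall>i\<in>I. 1 / real N * b i N < r)"
    unfolding eventually_sequentially by blast
  have "0 \<le> r"
  proof -
    obtain i where "i \<in> I" using \<open>I \<noteq> {}\<close> by blast
    then have "0 \<le> 1 / real N0 * b i N0" using nonneg by simp
    then show ?thesis using N0[OF order.refl] \<open>i \<in> I\<close> by fastforce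
  qed
  have "b i N \<le> r * N" if "N0 \<le> N" "i \<in> I" for i N
  proof -
    have "0 < N" "b i N / N < r" using N0[OF that(1)] that(2) by auto
    then show ?thesis by (simp add: divide_less_eq less_imp_le)
  qed
  then have "eventually (\<lambda>N. \<forall>i\<in>I. b i N \<le> r * N) sequentially"
    unfolding eventually_sequentially by blast
  then have "A \<le> ereal (card I * (1 + 3 * n / m) * r)"
    unfolding A_def using \<open>0 < n\<close> \<open>0 < m\<close> \<open>0 \<le> r\<close> bound by (intro limsup_average_le)
  then have "ereal c * A \<le> ereal c * ereal (card I * (1 + 3 * n / m) * r)"
    unfolding c_def by (intro ereal_mult_left_mono) auto
  also have "\<dots> = ereal r"
  proof -
    have "0 < card I" "0 < 1 + 3 * real n / m"
      using \<open>finite I\<close> \<open>I \<noteq> {}\<close> by (simp_all add: card_gt_0_iff add_pos_nonneg)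
    then show ?thesis unfolding c_def by simp
  qed
  finally show False using r(2) by simp
qed

lemma occurrence_between:
  fixes X :: "(nat \<Rightarrow> 'a) set" and z :: "'i \<Rightarrow> 'a list"
  assumes "x \<in> X" "length w = n"
    and separation: "\<forall>y\<in>language X. length y > max n m \<longrightarrow>
           (\<forall>j j'. 1 \<le> j \<and> j < j' \<and> j' \<le> length y - max m n
              \<and> subword y j n = w \<and> subword y j' n = w \<longrightarrow>
              (\<exists>i\<in>I. \<exists>k. j \<le> k \<and> k < j' \<and> subword y k m = z i))"
    and "k < k'" "factor x k n = w" "factor x k' n = w"
  shows "\<exists>q. k \<le> q \<and> q < k' \<and> (\<exists>i\<in>I. factor x q m = z i)"
proof -
  define l where "l = k' - k + 1 + max n m"
  define y where "y = factor x k l"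
  have "y \<in> language X" unfolding y_def by (rule factor_in_language[OF \<open>x \<in> X\<close>]) (simp add: l_def)
  moreover have "length y > max n m" by (simp add: y_def l_def less_Suc_eq_le)
  moreover have "subword y 1 n = w" "subword y (k' - k + 1) n = w"
    using assms(2,4-6) take_drop_factor[of 0 n l x k] take_drop_factor[of "k' - k" n l x k]
    unfolding subword_def y_def l_def by auto
  moreover have "k' - k + 1 \<le> length y - max m n" by (simp add: y_def l_def max.commute)
  ultimately obtain i j where i: "i \<in> I" "1 \<le> j" "j < k' - k + 1" "subword y j m = z i"
    using separation \<open>k < k'\<close> by (metis less_add_same_cancel2 zero_less_diff zero_less_one le_refl)
  have "subword y j m = factor x (k + (j - 1)) m" unfolding subword_def y_def
    by (rule take_drop_factor) (use i in \<open>auto simp: l_def\<close>)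
  then show ?thesis using i by (intro exI[of _ "k + (j - 1)"]) force
qed

lemma occurrence_count_bound:
  fixes z :: "'i \<Rightarrow> 'a list"
  assumes "finite I" "0 < n" "0 < m" "length w = n" "\<And>i. i \<in> I \<Longrightarrow> length (z i) = m"
    and between: "\<And>k k'. k < k' \<Longrightarrow> factor x k n = w \<Longrightarrow> factor x k' n = w
                    \<Longrightarrow> \<exists>q. k \<le> q \<and> q < k' \<and> (\<exists>i\<in>I. factor x q m = z i)"
  shows "((\<Sum>j=1..N. occ_ind K w x j) - 1) * n
           \<le> (real m + 3 * real n) * (\<Sum>i\<in>I. \<Sum>j=1..N * n div m + 1. occ_ind K (z i) x j)"
proof -
  define Jw where "Jw = block_hits ((K + 1) * n) (\<lambda>k. factor x k n = w) N"
  define Z where "Z i = block_hits ((K + 1) * m) (\<lambda>k. factor x k m = z i) (N * n div m + 1)" for i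
  have "N * ((K + 1) * n) div ((K + 1) * m) = (K + 1) * (N * n) div ((K + 1) * m)"
    by (simp only: mult.left_commute)
  also have "\<dots> = N * n div m" by (rule div_mult_mult1) simp
  finally have "N * ((K + 1) * n) div ((K + 1) * m) = N * n div m" .
  then have "(card Jw - 1) * ((K + 1) * n)
      \<le> card (\<Union>i\<in>I. Z i) * ((K + 1) * m + 3 * ((K + 1) * n))"
    using card_block_hits_le[OF between, where L = "(K + 1) * n" and M = "(K + 1) * m" and N = N] \<open>0 < n\<close> \<open>0 < m\<close>
    unfolding Jw_def Z_def block_hits_UN[symmetric] by simp
  moreover have "(card Jw - 1) * ((K + 1) * n) = (K + 1) * ((card Jw - 1) * n)"
    and "c * ((K + 1) * m + 3 * ((K + 1) * n)) = (K + 1) * (c * (m + 3 * n))" for c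
    by (simp_all add: ac_simps distrib_left distrib_right)
  ultimately have "(card Jw - 1) * n \<le> card (\<Union>i\<in>I. Z i) * (m + 3 * n)"
    by (metis mult_le_cancel1 add_gr_0 zero_less_one)
  also have "\<dots> \<le> (\<Sum>i\<in>I. card (Z i)) * (m + 3 * n)"
    using card_UN_le[OF \<open>finite I\<close>, of Z] by (rule mult_right_mono) simp
  finally have "real ((card Jw - 1) * n) \<le> real ((\<Sum>i\<in>I. card (Z i)) * (m + 3 * n))"
    by (simp only: of_nat_le_iff)
  moreover have "(real (card Jw) - 1) * n \<le> real (card Jw - 1) * n"
    by (rule mult_right_mono) (cases "card Jw", simp_all)
  moreover have "(\<Sum>j=1..N. occ_ind K w x j) = real (card Jw)"
    unfolding Jw_def sum_occ_ind_eq_card_block_hits \<open>length w = n\<close> ..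
  moreover have "(\<Sum>i\<in>I. \<Sum>j=1..N * n div m + 1. occ_ind K (z i) x j) = real (\<Sum>i\<in>I. card (Z i))"
    unfolding of_nat_sum Z_def sum_occ_ind_eq_card_block_hits using assms(5) by (intro sum.cong) auto
  ultimately show ?thesis by (simp add: mult.commute)
qed

theorem mainTheorem17:
  fixes X :: "(nat \<Rightarrow> 'a::finite) set"
    and K n m p :: nat and w :: "'a list" and z :: "nat \<Rightarrow> 'a list"
  assumes "subshift X"
    and "K > 0"
    and "w \<in> language X" and "length w = n"
    and "p \<ge> 1"
    and "\<forall>i\<in>{1..p}. z i \<in> language X \<and> length (z i) = m"
    and "\<forall>y\<in>language X. length y > max n m \<longrightarrow>
           (\<forall>j j'. 1 \<le> j \<and> j < j' \<and> j' \<le> length y - max m n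
              \<and> subword y j n = w \<and> subword y j' n = w \<longrightarrow>
              (\<exists>i\<in>{1..p}. \<exists>k. j \<le> k \<and> k < j' \<and> subword y k m = z i))"
  shows "\<forall>x\<in>X. \<exists>j\<in>{1..p}.
           upper_density K (z j) x
             \<ge> ereal (1 / (real p * (1 + 3 * real n / real m))) * upper_density K w x"
proof
  fix x assume "x \<in> X"
  have "0 < n" using assms(3,4) unfolding language_def by auto
  have "0 < m" using assms(5,6) unfolding language_def by force
  have between: "\<exists>q. k \<le> q \<and> q < k' \<and> (\<exists>i\<in>{1..p}. factor x q m = z i)"
    if "k < k'" "factor x k n = w" "factor x k' n = w" for k k'
    using occurrence_between[OF \<open>x \<in> X\<close> assms(4,7) that] .
  have "((\<Sum>j=1..N. occ_ind K w x j) - 1) * n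
           \<le> (real m + 3 * real n) * (\<Sum>i\<in>{1..p}. \<Sum>j=1..N * n div m + 1. occ_ind K (z i) x j)" for N
    by (rule occurrence_count_bound[OF _ \<open>0 < n\<close> \<open>0 < m\<close> assms(4) _ between])
      (use assms(6) in auto)
  moreover have "0 \<le> (\<Sum>j=1..N. occ_ind K (z i) x j)" for i N
    by (intro sum_nonneg) (simp add: occ_ind_def Let_def)
  ultimately show "\<exists>j\<in>{1..p}. upper_density K (z j) x
               \<ge> ereal (1 / (real p * (1 + 3 * real n / real m))) * upper_density K w x"
    using exists_limsup_average_ge[of "{1..p}" n m "\<lambda>i N. \<Sum>j=1..N. occ_ind K (z i) x j"]
      \<open>0 < n\<close> \<open>0 < m\<close> assms(5) unfolding upper_density_def by simp
qed

end
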